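(* Let the true margin $\gamma$ of $\mathcal{D}$ satisfy $\gamma>0$. For any finite dataset $R\subseteq\mathrm{supp}(\mathcal{D})$ with empirical margin $\gamma_R\ge\gamma>0$, $$\mathrm{RS}_{\mathrm{SVM}}(R)\le\sqrt{\frac{1}{\gamma^2}-\frac{1}{\gamma_R^2}}.$$
   Context: Let $k$ be a positive semidefinite kernel on $\mathcal{X}$ with RKHS $(\mathcal{H},\langle\cdot,\cdot\rangle_{\mathcal{H}})$ and feature map $\phi$ with $k(x,x')=\langle\phi(x),\phi(x')\rangle_{\mathcal{H}}$. Let $\mathcal{D}$ be a distribution on $\mathcal{X}\times\{-1,+1\}$. The true margin is $\gamma=\sup_{u\in\mathcal{H},\|u\|_{\mathcal{H}}=1}\inf_{(x,y)\in\mathrm{supp}(\mathcal{D})}y\langle u,\phi(x)\rangle_{\mathcal{H}}$, and the empirical margin $\gamma_R$ of a dataset $R=\{(x_i,y_i)\}_{i=1}^n$ is defined with the infimum over $(x_i,y_i)\in R$ instead. The hard-margin kernel SVM solution is $w_R\in\arg\min_{w\in\mathcal{H}}\frac12\|w\|_{\mathcal{H}}^2$ subject to $y_i\langle w,\phi(x_i)\rangle_{\mathcal{H}}\ge1$ for all $i$. The retain sensitivity is $\mathrm{RS}_{\mathrm{SVM}}(R)=\sup_{(x,y)\in\mathrm{supp}(\mathcal{D})}\|w_R-w_{R\cup\{(x,y)\}}\|_{\mathcal{H}}$. *)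

theory Defs
  imports "HOL-Analysis.Analysis"
begin

text \<open>The RKHS is modelled as an abstract real Hilbert space 'h (real inner product space,
complete), the feature map as phi :: 'x => 'h, so that k(x,x') = inner (phi x) (phi x').
The distribution D only enters through its support, modelled as a set S of labelled points.\<close>

text \<open>Margin of a set of labelled points T (infimum taken in the extended reals, so that
an empty infimum is +infinity and an unbounded one is -infinity).\<close>
definition margin :: "('x \<Rightarrow> 'h::real_inner) \<Rightarrow> ('x \<times> real) set \<Rightarrow> ereal" where
  "margin phi T =
     (SUP u\<in>{u::'h. norm u = 1}. INF p\<in>T. ereal (snd p * inner u (phi (fst p))))"

definition svm_solution :: "('x \<Rightarrow> 'h::real_inner) \<Rightarrow> ('x \<times> real) set \<Rightarrow> 'h \<Rightarrow> bool" where
  "svm_solution phi R w \<longleftrightarrow>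
     (\<forall>p\<in>R. snd p * inner w (phi (fst p)) \<ge> 1) \<and>
     (\<forall>v. (\<forall>p\<in>R. snd p * inner v (phi (fst p)) \<ge> 1) \<longrightarrow> (1/2) * (norm w)^2 \<le> (1/2) * (norm v)^2)"

text \<open>Retain sensitivity, given the solution wR for R and a choice W p of solution for R \<union> {p}.\<close>
definition retain_sensitivity :: "('x \<times> real) set \<Rightarrow> 'h::real_normed_vector \<Rightarrow> ('x \<times> real \<Rightarrow> 'h) \<Rightarrow> ereal" where
  "retain_sensitivity S wR W = (SUP p\<in>S. ereal (norm (wR - W p)))"

end

theory Submission
  imports Defs
begin

text \<open>The SVM solution w for R is the minimum-norm point of the closed convex set of vectors
satisfying the constraints of R, and the solution w' for a larger dataset lies in that set.
The obtuse-angle property of the projection of 0 gives inner w (w' - w) \<ge> 0, hence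
norm (w - w')^2 \<le> norm w'^2 - norm w^2. Finally, norm w' \<le> 1/\<gamma> because u / g satisfies all
constraints whenever the unit vector u has margin g < \<gamma> on the support, and norm w \<ge> 1/\<gamma>_R because w / norm w has margin at least 1 / norm w on R.\<close>

definition svm_feasible :: "('x \<Rightarrow> 'h::real_inner) \<Rightarrow> ('x \<times> real) set \<Rightarrow> 'h set" where
  "svm_feasible phi T = {v. \<forall>p\<in>T. 1 \<le> snd p * inner v (phi (fst p))}"

lemma svm_solution_iff:
  "svm_solution phi T w \<longleftrightarrow> w \<in> svm_feasible phi T \<and> (\<forall>v\<in>svm_feasible phi T. norm w \<le> norm v)"
  unfolding svm_solution_def svm_feasible_def by auto

lemma svm_feasible_antimono: "R \<subseteq> T \<Longrightarrow> svm_feasible phi T \<subseteq> svm_feasible phi R"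
  unfolding svm_feasible_def by auto

lemma convex_svm_feasible: "convex (svm_feasible phi T)"
proof (rule convexI)
  fix v w and s t :: real
  assume "v \<in> svm_feasible phi T" "w \<in> svm_feasible phi T" "0 \<le> s" "0 \<le> t" "s + t = 1"
  then show "s *\<^sub>R v + t *\<^sub>R w \<in> svm_feasible phi T"
    unfolding svm_feasible_def
  proof (intro CollectI ballI)
    fix p assume "p \<in> T"
    with \<open>v \<in> svm_feasible phi T\<close> \<open>w \<in> svm_feasible phi T\<close> \<open>0 \<le> s\<close> \<open>0 \<le> t\<close>
    have "s * 1 + t * 1 \<le> s * (snd p * inner v (phi (fst p))) + t * (snd p * inner w (phi (fst p)))"
      unfolding svm_feasible_def by (intro add_mono mult_left_mono) auto
    then show "1 \<le> snd p * inner (s *\<^sub>R v + t *\<^sub>R w) (phi (fst p))"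
      using \<open>s + t = 1\<close> by (simp add: algebra_simps)
  qed
qed

lemma closed_svm_feasible: "closed (svm_feasible phi T)"
proof -
  have "svm_feasible phi T = (\<Inter>p\<in>T. {v. 1 \<le> snd p * inner v (phi (fst p))})"
    unfolding svm_feasible_def by auto
  then show ?thesis
    by (simp add: closed_INT closed_Collect_le continuous_on_mult continuous_on_inner)
qed

lemma svm_solution_inner_nonneg:
  assumes "svm_solution phi R w" "v \<in> svm_feasible phi R"
  shows "0 \<le> inner w (v - w)"
proof -
  have "inner (0 - w) (v - w) \<le> 0"
    using assms
    by (intro any_closest_point_dot[OF convex_svm_feasible closed_svm_feasible])
       (auto simp: svm_solution_iff)
  then show ?thesis by simp
qed

lemma svm_solution_norm_diff_sq_le:
  assumes "R \<subseteq> T" "svm_solution phi R w" "svm_solution phi T w'"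
  shows "(norm (w - w'))\<^sup>2 \<le> (norm w')\<^sup>2 - (norm w)\<^sup>2"
proof -
  have "w' \<in> svm_feasible phi T"
    using assms(3) by (simp add: svm_solution_iff)
  then have "w' \<in> svm_feasible phi R"
    using svm_feasible_antimono[OF assms(1)] by blast
  then have "0 \<le> inner w (w' - w)"
    by (rule svm_solution_inner_nonneg[OF assms(2)])
  moreover have "(norm (w - w'))\<^sup>2 = (norm w')\<^sup>2 - (norm w)\<^sup>2 - 2 * inner w (w' - w)"
    unfolding power2_norm_eq_inner
    by (simp add: inner_commute algebra_simps)
  ultimately show ?thesis by linarith
qed

lemma ereal_le_marginI:
  assumes "norm u = 1" "\<forall>p\<in>T. g \<le> snd p * inner u (phi (fst p))"
  shows "ereal g \<le> margin phi T"
  unfolding margin_def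
  by (rule SUP_upper2[where i=u]) (use assms in \<open>auto intro!: INF_greatest\<close>)

lemma less_marginE:
  assumes "ereal g < margin phi T"
  obtains u where "norm u = 1" "\<forall>p\<in>T. g \<le> snd p * inner u (phi (fst p))"
proof -
  from assms obtain u where u: "norm u = 1"
    "ereal g < (INF p\<in>T. ereal (snd p * inner u (phi (fst p))))"
    unfolding margin_def less_SUP_iff by auto
  have "\<forall>p\<in>T. g \<le> snd p * inner u (phi (fst p))"
  proof
    fix p assume "p \<in> T"
    then have "ereal g < ereal (snd p * inner u (phi (fst p)))"
      by (rule less_INF_D[OF u(2)])
    then show "g \<le> snd p * inner u (phi (fst p))" by simp
  qed
  with u(1) show thesis by (rule that)
qed

lemma margin_le_norm:
  fixes phi :: "'x \<Rightarrow> 'h::real_inner"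
  assumes "p \<in> T" "snd p \<in> {-1, 1}"
  shows "margin phi T \<le> ereal (norm (phi (fst p)))"
  unfolding margin_def
proof (rule SUP_least)
  fix u :: 'h assume "u \<in> {u. norm u = 1}"
  then have "snd p * inner u (phi (fst p)) \<le> norm (phi (fst p))"
    using Cauchy_Schwarz_ineq2[of u "phi (fst p)"] assms(2) by auto
  then show "(INF p\<in>T. ereal (snd p * inner u (phi (fst p)))) \<le> ereal (norm (phi (fst p)))"
    using assms(1) by (auto intro: INF_lower2)
qed

lemma margin_empty:
  fixes phi :: "'x \<Rightarrow> 'h::real_inner"
  shows "margin phi {} = \<infinity> \<or> margin phi {} = -\<infinity>"
proof (cases "{u::'h. norm u = 1} = {}")
  case True
  then show ?thesis unfolding margin_def True by (simp add: bot_ereal_def)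
next
  case False
  then show ?thesis unfolding margin_def by (simp add: top_ereal_def)
qed

lemma svm_solution_norm_le_inverse_margin:
  assumes "T \<subseteq> S" "margin phi S = ereal \<gamma>" "0 < \<gamma>" "svm_solution phi T w"
  shows "norm w \<le> 1 / \<gamma>"
proof (cases "w = 0")
  case False
  have "g \<le> 1 / norm w" if g: "0 < g" "g < \<gamma>" for g
  proof -
    obtain u where u: "norm u = 1" "\<forall>p\<in>S. g \<le> snd p * inner u (phi (fst p))"
      using less_marginE[of g phi S] g assms(2) by auto
    have "u /\<^sub>R g \<in> svm_feasible phi T"
      using u(2) assms(1) g(1) unfolding svm_feasible_def by (auto simp: divide_simps)
    then have "norm w \<le> norm (u /\<^sub>R g)"
      using assms(4) unfolding svm_solution_iff by blast
    also have "\<dots> = 1 / g"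
      using u(1) g(1) by (simp add: divide_inverse_commute)
    finally have "norm w \<le> 1 / g" .
    with g(1) False show ?thesis by (simp add: field_simps)
  qed
  then have "\<gamma> \<le> 1 / norm w"
    by (rule dense_le_bounded[OF assms(3)])
  with False assms(3) show ?thesis by (simp add: field_simps)
qed (use assms(3) in simp)

text \<open>For an infinite margin, real_of_ereal gives 0 and 1 / 0 = 0, so the bound is trivial.\<close>

lemma svm_solution_inverse_margin_sq_le:
  assumes "svm_solution phi R w" "0 < margin phi R"
  shows "1 / (real_of_ereal (margin phi R))\<^sup>2 \<le> (norm w)\<^sup>2"
proof (cases "margin phi R = \<infinity>")
  case False
  then have "R \<noteq> {}" using margin_empty assms(2) by force
  then have "w \<noteq> 0" using assms(1) by (auto simp: svm_solution_iff svm_feasible_def)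
  then have "ereal (1 / norm w) \<le> margin phi R"
    using assms(1) by (intro ereal_le_marginI[where u = "w /\<^sub>R norm w"])
      (auto simp: svm_solution_iff svm_feasible_def divide_simps)
  with False assms(2) obtain \<gamma>R where \<gamma>R: "margin phi R = ereal \<gamma>R" "1 / norm w \<le> \<gamma>R"
    by (cases "margin phi R") auto
  have "0 < 1 / norm w"
    using \<open>w \<noteq> 0\<close> by simp
  then have "0 < \<gamma>R"
    using \<gamma>R(2) by linarith
  have "1 / \<gamma>R \<le> norm w"
    using le_imp_inverse_le[OF \<gamma>R(2) \<open>0 < 1 / norm w\<close>] by (simp add: inverse_eq_divide)
  with \<open>0 < \<gamma>R\<close> show ?thesis
    using \<gamma>R(1) power_mono[of "1 / \<gamma>R" "norm w" 2] by (simp add: power_divide)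
qed simp

lemma svm_solution_norm_diff_le:
  assumes "R \<subseteq> T" "T \<subseteq> S" "margin phi S = ereal \<gamma>" "0 < \<gamma>" "0 < margin phi R"
    and "svm_solution phi R w" "svm_solution phi T w'"
  shows "norm (w - w') \<le> sqrt (1 / \<gamma>\<^sup>2 - 1 / (real_of_ereal (margin phi R))\<^sup>2)"
proof (rule real_le_rsqrt)
  have "norm w' \<le> 1 / \<gamma>"
    using assms(2-4,7) by (rule svm_solution_norm_le_inverse_margin)
  then have "(norm w')\<^sup>2 \<le> 1 / \<gamma>\<^sup>2"
    using power_mono[OF _ norm_ge_zero, of w' "1 / \<gamma>" 2] by (simp add: power_divide)
  moreover have "1 / (real_of_ereal (margin phi R))\<^sup>2 \<le> (norm w)\<^sup>2"
    using assms(6,5) by (rule svm_solution_inverse_margin_sq_le)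
  moreover have "(norm (w - w'))\<^sup>2 \<le> (norm w')\<^sup>2 - (norm w)\<^sup>2"
    using assms(1,6,7) by (rule svm_solution_norm_diff_sq_le)
  ultimately show "(norm (w - w'))\<^sup>2 \<le> 1 / \<gamma>\<^sup>2 - 1 / (real_of_ereal (margin phi R))\<^sup>2"
    by linarith
qed

theorem mainTheorem10:
  fixes phi :: "'x \<Rightarrow> 'h::{real_inner, complete_space}"
    and S R :: "('x \<times> real) set"
    and wR :: 'h and W :: "'x \<times> real \<Rightarrow> 'h"
  assumes labels: "S \<subseteq> UNIV \<times> {-1, 1}"
    and gamma_pos: "margin phi S > 0"
    and R_fin: "finite R" and R_sub: "R \<subseteq> S"
    and R_margin: "margin phi R \<ge> margin phi S"
    and wR_sol: "svm_solution phi R wR"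
    and W_sol: "\<forall>p\<in>S. svm_solution phi (insert p R) (W p)"
  shows "retain_sensitivity S wR W \<le>
           ereal (sqrt (1 / (real_of_ereal (margin phi S))^2
                        - 1 / (real_of_ereal (margin phi R))^2))"
proof (cases "S = {}")
  case True
  then show ?thesis
    unfolding retain_sensitivity_def by (simp add: bot_ereal_def)
next
  case False
  then obtain p0 where "p0 \<in> S" by blast
  then have "margin phi S \<le> ereal (norm (phi (fst p0)))"
    using labels by (intro margin_le_norm) auto
  with gamma_pos obtain \<gamma> where \<gamma>: "margin phi S = ereal \<gamma>" "0 < \<gamma>"
    by (cases "margin phi S") auto
  have "norm (wR - W p) \<le> sqrt (1 / \<gamma>\<^sup>2 - 1 / (real_of_ereal (margin phi R))\<^sup>2)"
    if "p \<in> S" for p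
  proof (rule svm_solution_norm_diff_le[where T = "insert p R"])
    show "insert p R \<subseteq> S" using that R_sub by blast
    show "0 < margin phi R" using gamma_pos R_margin by simp
  qed (use \<gamma> wR_sol W_sol that in auto)
  then show ?thesis
    unfolding retain_sensitivity_def \<gamma>
    by (intro SUP_least) simp
qed

end
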